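(* Let $n\geq 2$ and let $(A,\cdot,[\cdot,\ldots,\cdot])$ be a transposed Poisson $n$-Lie algebra. Then for all $h,x_1,\ldots,x_n,y_2,\ldots,y_n\in A$, $$\sum_{j=2}^n[[x_1,\ldots,x_n],y_2,\ldots,y_jh,\ldots,y_n]=\sum_{i=1}^n\sum_{\substack{j=1\\ j\neq i}}^n(-1)^{i-1}[[x_i,y_2,\ldots,y_n],x_1,\ldots,x_jh,\ldots,\hat{x}_i,\ldots,x_n],$$ where on the left $y_jh$ replaces $y_j$ in its slot, and on the right the outer bracket has as its remaining arguments $x_1,\ldots,x_n$ in order with $x_i$ omitted and $x_j$ replaced by $x_jh$.
   Context: An $n$-Lie algebra is a vector space $L$ with an $n$-linear skew-symmetric bracket $[\cdot,\ldots,\cdot]$ satisfying $[[x_1,\ldots,x_n],y_2,\ldots,y_n]=\sum_{i=1}^n[x_1,\ldots,x_{i-1},[x_i,y_2,\ldots,y_n],x_{i+1},\ldots,x_n]$ for all $x_i,y_j\in L$. A transposed Poisson $n$-Lie algebra (over $\mathbb{C}$) is a triple $(A,\cdot,[\cdot,\ldots,\cdot])$ where $(A,\cdot)$ is a commutative associative algebra, $(A,[\cdot,\ldots,\cdot])$ is an $n$-Lie algebra, and for all $h,a_1,\ldots,a_n\in A$: $n\,h\,[a_1,\ldots,a_n]=\sum_{i=1}^n[a_1,\ldots,h a_i,\ldots,a_n]$ (with $ha_i$ in the $i$-th slot). $\hat{x}_i$ means $x_i$ is omitted. *)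

theory Defs
  imports Complex_Main
begin

definition cvec_space :: "(complex \<Rightarrow> 'a::ab_group_add \<Rightarrow> 'a) \<Rightarrow> bool" where
  "cvec_space sc \<longleftrightarrow>
     (\<forall>a x y. sc a (x + y) = sc a x + sc a y) \<and>
     (\<forall>a b x. sc (a + b) x = sc a x + sc b x) \<and>
     (\<forall>a b x. sc a (sc b x) = sc (a * b) x) \<and>
     (\<forall>x. sc 1 x = x)"

text \<open>Commutative associative complex algebra: the ring multiplication of 'a
  (commutative and associative by the class comm_ring; no unit required) is
  bilinear with respect to sc.\<close>

definition comm_assoc_calg :: "(complex \<Rightarrow> 'a::comm_ring \<Rightarrow> 'a) \<Rightarrow> bool" where
  "comm_assoc_calg sc \<longleftrightarrow> cvec_space sc \<and>
     (\<forall>a x y. sc a (x * y) = sc a x * y) \<and>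
     (\<forall>a x y. x * sc a y = sc a (x * y))"

text \<open>An n-ary bracket is modelled as a function on lists; only its values on
  lists of length n matter.\<close>

definition multilinear :: "(complex \<Rightarrow> 'a::ab_group_add \<Rightarrow> 'a) \<Rightarrow> nat \<Rightarrow> ('a list \<Rightarrow> 'a) \<Rightarrow> bool" where
  "multilinear sc n br \<longleftrightarrow>
     (\<forall>xs i u v. length xs = n \<longrightarrow> i < n \<longrightarrow>
        br (xs[i := u + v]) = br (xs[i := u]) + br (xs[i := v])) \<and>
     (\<forall>xs i a u. length xs = n \<longrightarrow> i < n \<longrightarrow>
        br (xs[i := sc a u]) = sc a (br (xs[i := u])))"

definition skew_symmetric :: "nat \<Rightarrow> ('a::ab_group_add list \<Rightarrow> 'a) \<Rightarrow> bool" where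
  "skew_symmetric n br \<longleftrightarrow>
     (\<forall>xs i j. length xs = n \<longrightarrow> i < n \<longrightarrow> j < n \<longrightarrow> i \<noteq> j \<longrightarrow>
        br (xs[i := xs ! j, j := xs ! i]) = - br xs)"

text \<open>Filippov identity:
  [[x_1..x_n], y_2..y_n] = sum_i [x_1,..,[x_i,y_2..y_n],..,x_n].
  ys is the list y_2..y_n of length n-1.\<close>

definition filippov :: "nat \<Rightarrow> ('a::ab_group_add list \<Rightarrow> 'a) \<Rightarrow> bool" where
  "filippov n br \<longleftrightarrow>
     (\<forall>xs ys. length xs = n \<longrightarrow> length ys = n - 1 \<longrightarrow>
        br (br xs # ys) = (\<Sum>i<n. br (xs[i := br (xs ! i # ys)])))"

definition n_Lie :: "(complex \<Rightarrow> 'a::ab_group_add \<Rightarrow> 'a) \<Rightarrow> nat \<Rightarrow> ('a list \<Rightarrow> 'a) \<Rightarrow> bool" where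
  "n_Lie sc n br \<longleftrightarrow> cvec_space sc \<and> multilinear sc n br \<and> skew_symmetric n br \<and> filippov n br"

definition transposed_poisson_nLie ::
  "(complex \<Rightarrow> 'a::comm_ring \<Rightarrow> 'a) \<Rightarrow> nat \<Rightarrow> ('a list \<Rightarrow> 'a) \<Rightarrow> bool" where
  "transposed_poisson_nLie sc n br \<longleftrightarrow>
     comm_assoc_calg sc \<and> n_Lie sc n br \<and>
     (\<forall>h as. length as = n \<longrightarrow>
        sc (of_nat n) (h * br as) = (\<Sum>i<n. br (as[i := h * as ! i])))"

end

theory Submission imports Defs begin

text \<open>Write S and Q for the left and right side, a = [h[x_1,...,x_n], y_2,...,y_n] and
  T = \<Sum>i [x_1,..., h[x_i, y_2,...,y_n],..., x_n]. The transposed Poisson identity applied to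
  [[x_1,...,x_n], y_2,...,y_n] gives n h [[x], y] = a + S, while the Filippov identity followed
  by the transposed Poisson identity in each slot gives n h [[x], y] = T + Q. Expanding n a
  instead, first by the transposed Poisson identity and then by the Filippov identity, gives
  n a = n T - S + Q. Hence the defect a - T equals Q - S and also n (a - T) = Q - S;
  since n \<ge> 2 it vanishes, and so S = Q.\<close>

lemma cvec_space_scale_zero: "cvec_space sc \<Longrightarrow> sc a 0 = 0"
  unfolding cvec_space_def by (metis add_cancel_right_right add_0)

lemma cvec_space_scale_sum:
  "cvec_space sc \<Longrightarrow> sc a (\<Sum>s\<in>S. f s) = (\<Sum>s\<in>S. sc a (f s))"
  by (induction S rule: infinite_finite_induct)
    (auto simp: cvec_space_scale_zero, simp add: cvec_space_def)

lemma cvec_space_scale_diff_one: "cvec_space sc \<Longrightarrow> sc (c - 1) x = sc c x - x"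
  unfolding cvec_space_def by (metis add_diff_cancel diff_add_cancel)

lemma cvec_space_scale_cancel:
  assumes "cvec_space sc" and "c \<noteq> 0" and "sc c x = sc c y"
  shows "x = y"
proof -
  have "sc (1 / c) (sc c z) = z" for z
    using assms(1,2) unfolding cvec_space_def by simp
  then show ?thesis using assms(3) by metis
qed

lemma multilinear_update_add:
  "multilinear sc n br \<Longrightarrow> length xs = n \<Longrightarrow> i < n \<Longrightarrow>
    br (xs[i := u + v]) = br (xs[i := u]) + br (xs[i := v])"
  unfolding multilinear_def by blast

lemma multilinear_update_scale:
  "multilinear sc n br \<Longrightarrow> length xs = n \<Longrightarrow> i < n \<Longrightarrow>
    br (xs[i := sc a u]) = sc a (br (xs[i := u]))"
  unfolding multilinear_def by blast

lemma multilinear_update_zero: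
  "multilinear sc n br \<Longrightarrow> length xs = n \<Longrightarrow> i < n \<Longrightarrow> br (xs[i := 0]) = 0"
  using multilinear_update_add[of sc n br xs i 0 0] by simp

lemma multilinear_update_diff:
  assumes "multilinear sc n br" and "length xs = n" and "i < n"
  shows "br (xs[i := u - v]) = br (xs[i := u]) - br (xs[i := v])"
proof -
  have "br (xs[i := u - v]) + br (xs[i := v]) = br (xs[i := u])"
    using multilinear_update_add[OF assms, of "u - v" v] by simp
  then show ?thesis by (simp add: eq_diff_eq)
qed

lemma multilinear_update_sum:
  "multilinear sc n br \<Longrightarrow> length xs = n \<Longrightarrow> i < n \<Longrightarrow>
    br (xs[i := \<Sum>s\<in>S. f s]) = (\<Sum>s\<in>S. br (xs[i := f s]))"
  by (induction S rule: infinite_finite_induct)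
    (auto simp: multilinear_update_zero multilinear_update_add)

lemma skew_symmetric_swap:
  "skew_symmetric n br \<Longrightarrow> length xs = n \<Longrightarrow> i < n \<Longrightarrow> j < n \<Longrightarrow> i \<noteq> j \<Longrightarrow>
    br (xs[i := xs ! j, j := xs ! i]) = - br xs"
  unfolding skew_symmetric_def by blast

lemma skew_symmetric_move_to_front:
  assumes "skew_symmetric n br" and "length xs = n" and "i < n"
  shows "br (u # (take i xs @ drop (Suc i) xs)) =
    (if even i then br (xs[i := u]) else - br (xs[i := u]))"
  using assms(2,3)
proof (induction i arbitrary: xs)
  case 0
  then show ?case by (cases xs) auto
next
  case (Suc i)
  define xs' where "xs' = xs[Suc i := xs ! i]"
  have "length xs' = n"
    using Suc.prems by (simp add: xs'_def)
  have same_rest: "take i xs' @ drop (Suc i) xs' = take (Suc i) xs @ drop (Suc (Suc i)) xs"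
  proof -
    have "drop (Suc i) xs' = xs ! i # drop (Suc (Suc i)) xs"
      using Suc.prems \<open>length xs' = n\<close> by (simp add: xs'_def Cons_nth_drop_Suc[symmetric])
    then show ?thesis
      using Suc.prems by (simp add: xs'_def take_Suc_conv_app_nth)
  qed
  have "xs'[i := u] = (xs[Suc i := u])[i := xs[Suc i := u] ! Suc i, Suc i := xs[Suc i := u] ! i]"
    using Suc.prems unfolding xs'_def
    by (intro nth_equalityI) (auto simp: nth_list_update)
  then have "br (xs'[i := u]) = - br (xs[Suc i := u])"
    using skew_symmetric_swap[OF assms(1), of "xs[Suc i := u]" i "Suc i"] Suc.prems by simp
  then show ?case
    using Suc.IH[OF \<open>length xs' = n\<close>] Suc.prems same_rest by simp
qed

lemma sum_off_diagonal_swap: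
  fixes f :: "'b \<Rightarrow> 'b \<Rightarrow> 'c::comm_monoid_add"
  assumes "finite A"
  shows "(\<Sum>i\<in>A. \<Sum>k\<in>A - {i}. f i k) = (\<Sum>k\<in>A. \<Sum>i\<in>A - {k}. f i k)"
proof -
  have "\<And>i. A - {i} = {k \<in> A. i \<noteq> k}" "\<And>k. A - {k} = {i \<in> A. i \<noteq> k}" by auto
  then show ?thesis
    using sum.swap_restrict[OF assms assms, of f "\<lambda>i k. i \<noteq> k"] by simp
qed

locale transposed_poisson_algebra =
  fixes sc :: "complex \<Rightarrow> 'a::comm_ring \<Rightarrow> 'a" and n :: nat and br :: "'a list \<Rightarrow> 'a"
  assumes transposed_poisson: "transposed_poisson_nLie sc n br"
    and n_pos: "0 < n"
begin

lemma cvec_space: "cvec_space sc"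
  using transposed_poisson
  unfolding transposed_poisson_nLie_def comm_assoc_calg_def by blast

lemma multilinear: "multilinear sc n br"
  using transposed_poisson unfolding transposed_poisson_nLie_def n_Lie_def by blast

lemma skew_symmetric: "skew_symmetric n br"
  using transposed_poisson unfolding transposed_poisson_nLie_def n_Lie_def by blast

lemma filippov_identity:
  "length xs = n \<Longrightarrow> length ys = n - 1 \<Longrightarrow>
    br (br xs # ys) = (\<Sum>i<n. br (xs[i := br (xs ! i # ys)]))"
  using transposed_poisson
  unfolding transposed_poisson_nLie_def n_Lie_def filippov_def by blast

lemma transposed_poisson_identity:
  "length as = n \<Longrightarrow> sc (of_nat n) (h * br as) = (\<Sum>i<n. br (as[i := h * as ! i]))"
  using transposed_poisson unfolding transposed_poisson_nLie_def by blast

lemma length_Cons_args: "length ys = n - 1 \<Longrightarrow> length (u # ys) = n"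
  using n_pos by simp

lemma bracket_Cons_scale:
  "length ys = n - 1 \<Longrightarrow> br (sc a u # ys) = sc a (br (u # ys))"
  using multilinear_update_scale[OF multilinear length_Cons_args n_pos, of ys 0 a u] by simp

lemma bracket_Cons_sum:
  "length ys = n - 1 \<Longrightarrow> br ((\<Sum>s\<in>S. f s) # ys) = (\<Sum>s\<in>S. br (f s # ys))"
  using multilinear_update_sum[OF multilinear length_Cons_args n_pos, of ys 0 f S] by simp

lemma transposed_poisson_identity_Cons:
  assumes "length ys = n - 1"
  shows "sc (of_nat n) (h * br (u # ys)) =
    br (h * u # ys) + (\<Sum>j<n - 1. br (u # ys[j := h * ys ! j]))"
proof -
  obtain m where m: "n = Suc m"
    using n_pos gr0_implies_Suc by blast
  have "sc (of_nat n) (h * br (u # ys)) = (\<Sum>i<Suc m. br ((u # ys)[i := h * (u # ys) ! i]))"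
    using transposed_poisson_identity[OF length_Cons_args[OF assms]] m by simp
  also have "\<dots> = br (h * u # ys) + (\<Sum>j<m. br (u # ys[j := h * ys ! j]))"
    unfolding sum.lessThan_Suc_shift by simp
  finally show ?thesis
    using m by simp
qed

lemma transposed_poisson_identity_update:
  assumes "length xs = n" and "i < n"
  shows "sc (of_nat n) (h * br (xs[i := v])) =
    br (xs[i := h * v]) + (\<Sum>j\<in>{..<n} - {i}. br (xs[i := v, j := h * xs ! j]))"
proof -
  have "sc (of_nat n) (h * br (xs[i := v])) = (\<Sum>j<n. br (xs[i := v, j := h * xs[i := v] ! j]))"
    using transposed_poisson_identity assms(1) by simp
  also have "\<dots> = br (xs[i := h * v]) +
      (\<Sum>j\<in>{..<n} - {i}. br (xs[i := v, j := h * xs[i := v] ! j]))"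
    using assms by (simp add: sum.remove)
  also have "\<dots> = br (xs[i := h * v]) + (\<Sum>j\<in>{..<n} - {i}. br (xs[i := v, j := h * xs ! j]))"
    by (intro arg_cong2[where f = "(+)"] sum.cong) auto
  finally show ?thesis .
qed

lemma filippov_update:
  assumes "length xs = n" and "length ys = n - 1" and "i < n"
  shows "br (br (xs[i := v]) # ys) =
    br (xs[i := br (v # ys)]) + (\<Sum>k\<in>{..<n} - {i}. br (xs[i := v, k := br (xs ! k # ys)]))"
proof -
  have "br (br (xs[i := v]) # ys) = (\<Sum>k<n. br (xs[i := v, k := br (xs[i := v] ! k # ys)]))"
    using filippov_identity assms(1,2) by simp
  also have "\<dots> = br (xs[i := br (v # ys)]) +
      (\<Sum>k\<in>{..<n} - {i}. br (xs[i := v, k := br (xs[i := v] ! k # ys)]))"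
    using assms by (simp add: sum.remove)
  also have "\<dots> = br (xs[i := br (v # ys)]) +
      (\<Sum>k\<in>{..<n} - {i}. br (xs[i := v, k := br (xs ! k # ys)]))"
    by (intro arg_cong2[where f = "(+)"] sum.cong) auto
  finally show ?thesis .
qed

lemma transposed_poisson_filippov:
  assumes "length xs = n" and "length ys = n - 1"
  shows "sc (of_nat n) (h * br (br xs # ys)) =
    (\<Sum>i<n. br (xs[i := h * br (xs ! i # ys)])) +
    (\<Sum>i<n. \<Sum>j\<in>{..<n} - {i}. br (xs[i := br (xs ! i # ys), j := h * xs ! j]))"
proof -
  have "sc (of_nat n) (h * br (br xs # ys)) =
      (\<Sum>i<n. sc (of_nat n) (h * br (xs[i := br (xs ! i # ys)])))"
    using filippov_identity[OF assms]
    by (simp add: sum_distrib_left cvec_space_scale_sum[OF cvec_space])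
  also have "\<dots> = (\<Sum>i<n. br (xs[i := h * br (xs ! i # ys)]) +
      (\<Sum>j\<in>{..<n} - {i}. br (xs[i := br (xs ! i # ys), j := h * xs ! j])))"
    using transposed_poisson_identity_update assms(1) by simp
  finally show ?thesis by (simp add: sum.distrib)
qed

lemma scaled_bracket_mult_bracket:
  assumes lx: "length xs = n" and ly: "length ys = n - 1"
  shows "sc (of_nat n) (br (h * br xs # ys)) =
    sc (of_nat n) (\<Sum>i<n. br (xs[i := h * br (xs ! i # ys)]))
    - (\<Sum>j<n - 1. br (br xs # ys[j := h * ys ! j]))
    + (\<Sum>i<n. \<Sum>j\<in>{..<n} - {i}. br (xs[i := br (xs ! i # ys), j := h * xs ! j]))"
proof -
  let ?N = "of_nat n :: complex"
  have slot: "br (xs[i := br (h * xs ! i # ys)]) =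
      sc ?N (br (xs[i := h * br (xs ! i # ys)]))
      - (\<Sum>j<n - 1. br (xs[i := br (xs ! i # ys[j := h * ys ! j])]))"
    if "i < n" for i
  proof -
    have "br (h * xs ! i # ys) =
        sc ?N (h * br (xs ! i # ys)) - (\<Sum>j<n - 1. br (xs ! i # ys[j := h * ys ! j]))"
      using transposed_poisson_identity_Cons[OF ly, of h "xs ! i"] by (simp add: algebra_simps)
    then show ?thesis
      using that lx multilinear
      by (simp add: multilinear_update_diff multilinear_update_scale multilinear_update_sum)
  qed
  have inner_filippov: "(\<Sum>i<n. \<Sum>j<n - 1. br (xs[i := br (xs ! i # ys[j := h * ys ! j])])) =
      (\<Sum>j<n - 1. br (br xs # ys[j := h * ys ! j]))"
    using filippov_identity lx ly by (subst sum.swap) simp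
  have off_diagonal:
    "(\<Sum>i<n. \<Sum>k\<in>{..<n} - {i}. br (xs[i := h * xs ! i, k := br (xs ! k # ys)])) =
      (\<Sum>i<n. \<Sum>j\<in>{..<n} - {i}. br (xs[i := br (xs ! i # ys), j := h * xs ! j]))"
    by (subst sum_off_diagonal_swap) (auto intro!: sum.cong simp: list_update_swap)
  have "sc ?N (br (h * br xs # ys)) = br (sc ?N (h * br xs) # ys)"
    by (simp add: bracket_Cons_scale[OF ly])
  also have "\<dots> = (\<Sum>i<n. br (br (xs[i := h * xs ! i]) # ys))"
    by (simp add: transposed_poisson_identity[OF lx] bracket_Cons_sum[OF ly])
  also have "\<dots> = (\<Sum>i<n. br (xs[i := br (h * xs ! i # ys)]) +
      (\<Sum>k\<in>{..<n} - {i}. br (xs[i := h * xs ! i, k := br (xs ! k # ys)])))"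
    using filippov_update lx ly by simp
  also have "\<dots> = (\<Sum>i<n. sc ?N (br (xs[i := h * br (xs ! i # ys)]))
      - (\<Sum>j<n - 1. br (xs[i := br (xs ! i # ys[j := h * ys ! j])]))
      + (\<Sum>k\<in>{..<n} - {i}. br (xs[i := h * xs ! i, k := br (xs ! k # ys)])))"
    using slot by simp
  finally show ?thesis
    using inner_filippov off_diagonal
    by (simp add: sum.distrib sum_subtractf cvec_space_scale_sum[OF cvec_space])
qed

lemma bracket_mult_bracket:
  assumes "n \<ge> 2" and lx: "length xs = n" and ly: "length ys = n - 1"
  shows "br (h * br xs # ys) = (\<Sum>i<n. br (xs[i := h * br (xs ! i # ys)]))"
    (is "?a = ?T")
proof -
  let ?N = "of_nat n :: complex"
  let ?S = "\<Sum>j<n - 1. br (br xs # ys[j := h * ys ! j])"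
  let ?Q = "\<Sum>i<n. \<Sum>j\<in>{..<n} - {i}. br (xs[i := br (xs ! i # ys), j := h * xs ! j])"
  have unscaled: "?a + ?S = ?T + ?Q"
    using transposed_poisson_identity_Cons[OF ly, of h "br xs"] transposed_poisson_filippov[OF lx ly, of h] by simp
  have scaled: "sc ?N ?a + ?S = sc ?N ?T + ?Q"
    using scaled_bracket_mult_bracket[OF lx ly, of h] by (simp add: algebra_simps)
  have "sc ?N ?a - ?a = (sc ?N ?a + ?S) - (?a + ?S)"
    by simp
  also have "\<dots> = sc ?N ?T - ?T"
    unfolding scaled unscaled by simp
  finally have "sc (?N - 1) ?a = sc (?N - 1) ?T"
    by (simp add: cvec_space_scale_diff_one[OF cvec_space])
  moreover have "?N - 1 \<noteq> 0"
    using assms(1) by simp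
  ultimately show ?thesis
    using cvec_space_scale_cancel[OF cvec_space] by blast
qed

end

theorem mainTheorem3:
  fixes sc :: "complex \<Rightarrow> 'a::comm_ring \<Rightarrow> 'a"
    and br :: "'a list \<Rightarrow> 'a"
    and n :: nat
    and h :: 'a and xs ys :: "'a list"
  assumes "n \<ge> 2"
    and "transposed_poisson_nLie sc n br"
    and "length xs = n" and "length ys = n - 1"
  shows "(\<Sum>j<n - 1. br (br xs # ys[j := ys ! j * h])) =
         (\<Sum>i<n. \<Sum>j\<in>{..<n} - {i}.
            (let zs = xs[j := xs ! j * h];
                 t = br (br (xs ! i # ys) # (take i zs @ drop (Suc i) zs))
             in if even i then t else - t))"
proof -
  interpret transposed_poisson_algebra sc n br
    using assms(1,2) by unfold_locales simp_all
  note lx = assms(3) and ly = assms(4)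
  have signed_term: "(let zs = xs[j := xs ! j * h];
                 t = br (br (xs ! i # ys) # (take i zs @ drop (Suc i) zs))
             in if even i then t else - t) = br (xs[i := br (xs ! i # ys), j := h * xs ! j])"
    if "i < n" and "j \<noteq> i" for i j
    using skew_symmetric_move_to_front[OF skew_symmetric, of "xs[j := xs ! j * h]" i]
      that lx by (simp add: Let_def list_update_swap mult.commute)
  have "(\<Sum>j<n - 1. br (br xs # ys[j := ys ! j * h]))
      = sc (of_nat n) (h * br (br xs # ys)) - br (h * br xs # ys)"
    using transposed_poisson_identity_Cons[OF ly, of h "br xs"] by (simp add: mult.commute)
  also have "\<dots> = (\<Sum>i<n. \<Sum>j\<in>{..<n} - {i}. br (xs[i := br (xs ! i # ys), j := h * xs ! j]))"
    using transposed_poisson_filippov[OF lx ly, of h] bracket_mult_bracket[OF assms(1) lx ly, of h] by simp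
  also have "\<dots> = (\<Sum>i<n. \<Sum>j\<in>{..<n} - {i}.
            (let zs = xs[j := xs ! j * h];
                 t = br (br (xs ! i # ys) # (take i zs @ drop (Suc i) zs))
             in if even i then t else - t))"
    using signed_term by simp
  finally show ?thesis .
qed

end
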